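(* Let $f:[0,\infty)\to[0,\infty)$ be continuously differentiable with $f>0$ on $[t_0,\infty)$ for some $t_0\ge0$ and $f\in C^2([t_0,\infty))$, let $g=\log f$ on $[t_0,\infty)$, and assume condition (H1) of the context. Then $g$ and $g'$ are strictly increasing on $[t_0,\infty)$, $g(t)\to\infty$ and $g'(t)\to\infty$ as $t\to\infty$, and $$\lim_{t\to\infty}\frac{\log g'(t)}{g(t)}=0.$$
   Context: Condition (H1): (i) $g'(t)>0$ and $g''(t)>0$ for all $t\ge t_0$, and there is a pair $(q,p)$ with either $q=1$ and $p\in(0,\infty]$, or $q\in(1,\infty)$ and $p\in(0,\infty)$, such that $\lim_{t\to\infty}\frac{g'(t)^2}{g(t)g''(t)}=q$ and $\lim_{t\to\infty}\frac{tg'(t)}{g(t)}=p$; (ii) if $q=1$, then $tg'(t)/g(t)$ is nondecreasing on $[t_0,\infty)$ and there exist $k\in\mathbb{N}$ and $\hat g\in C^2([t_0,\infty))$ with $f=\exp_k\circ\hat g$ and $\hat g'/\hat g$ nonincreasing on $[t_0,\infty)$ ($\exp_1=\exp$, $\exp_k=\exp_{k-1}\circ\exp$). *)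

theory Defs
  imports "HOL-Analysis.Analysis"
begin

end

(*
  Since g' > 0 and g'' > 0, both g and g' increase and g grows at least linearly.
  Eventually q/2 < g'^2/(g g'') < 2q, and these bounds compare log-derivatives: the first gives
  (ln g')' < (2/q) (ln g)', hence ln g' = O(ln g) = o(g); if g' stayed below some Z, the second
  would give (1/g')' < -(ln g)'/(2qZ), so ln g would stay bounded.
*)
theory Submission
  imports Defs
begin

lemma has_real_derivative_at_if_within_atLeast:
  assumes "(F has_real_derivative D) (at x within {a..})" and "a < x"
  shows "(F has_real_derivative D) (at x)"
  using assms by (metis at_within_interior interior_real_atLeast greaterThan_iff)

lemma strict_mono_on_atLeast_if_deriv_pos:
  fixes F F' :: "real \<Rightarrow> real"
  assumes deriv: "\<forall>t\<ge>a. (F has_real_derivative F' t) (at t within {a..})"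
    and pos: "\<forall>t\<ge>a. F' t > 0"
  shows "strict_mono_on {a..} F"
proof (rule strict_mono_onI)
  fix s t assume "s \<in> {a..}" "t \<in> {a..}" "s < t"
  have "continuous_on {a..} F"
    using deriv by (metis DERIV_continuous atLeast_iff continuous_on_eq_continuous_within)
  then have "continuous_on {s..t} F"
    by (rule continuous_on_subset) (use \<open>s \<in> {a..}\<close> in auto)
  moreover have "\<exists>y. (F has_real_derivative y) (at x) \<and> 0 < y" if "s < x" for x
    using that \<open>s \<in> {a..}\<close> deriv pos has_real_derivative_at_if_within_atLeast[of F "F' x" x a]
    by force
  ultimately show "F s < F t"
    using DERIV_pos_imp_increasing_open[OF \<open>s < t\<close>] by blast
qed

lemma increment_le_if_deriv_le:
  fixes F G F' G' :: "real \<Rightarrow> real"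
  assumes "\<And>x. a \<le> x \<Longrightarrow> (F has_real_derivative F' x) (at x)"
    and "\<And>x. a \<le> x \<Longrightarrow> (G has_real_derivative G' x) (at x)"
    and "\<And>x. a \<le> x \<Longrightarrow> F' x \<le> G' x"
    and "a \<le> b"
  shows "F b - F a \<le> G b - G a"
proof -
  have "(\<lambda>x. G x - F x) a \<le> (\<lambda>x. G x - F x) b"
    by (rule DERIV_nonneg_imp_nondecreasing[OF \<open>a \<le> b\<close>])
      (use assms in \<open>auto intro!: exI DERIV_diff\<close>)
  then show ?thesis by simp
qed

lemma filterlim_at_top_if_deriv_ge:
  fixes g g' :: "real \<Rightarrow> real"
  assumes "\<And>x. a \<le> x \<Longrightarrow> (g has_real_derivative g' x) (at x)"
    and "\<And>x. a \<le> x \<Longrightarrow> c \<le> g' x" and "0 < c"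
  shows "filterlim g at_top at_top"
proof (rule filterlim_at_top_mono)
  show "filterlim (\<lambda>t. (g a - c * a) + c * t) at_top at_top"
    by (rule filterlim_tendsto_add_at_top[OF tendsto_const])
      (rule filterlim_tendsto_pos_mult_at_top[OF tendsto_const \<open>0 < c\<close> filterlim_ident])
  have "(g a - c * a) + c * t \<le> g t" if "a \<le> t" for t
  proof -
    have "c * t - c * a \<le> g t - g a"
      using increment_le_if_deriv_le[of a "\<lambda>t. c * t" "\<lambda>_. c" g g' t] assms that
      by (auto intro!: derivative_eq_intros)
    then show ?thesis by simp
  qed
  then show "eventually (\<lambda>t. (g a - c * a) + c * t \<le> g t) at_top"
    by (rule eventually_at_top_linorderI)
qed

lemma filterlim_div_0_if_ln_bounded:
  fixes g u :: "'a \<Rightarrow> real"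
  assumes g: "filterlim g at_top F"
    and bounds: "eventually (\<lambda>x. c \<le> u x \<and> u x \<le> C + k * ln (g x)) F"
  shows "((\<lambda>x. u x / g x) \<longlongrightarrow> 0) F"
proof (rule tendsto_sandwich)
  have g_inf: "filterlim g at_infinity F"
    using g filterlim_at_top_imp_at_infinity by blast
  show "((\<lambda>x. c / g x) \<longlongrightarrow> 0) F"
    by (rule tendsto_divide_0[OF tendsto_const g_inf])
  have "((\<lambda>x. C / g x + k * (ln (g x) / g x)) \<longlongrightarrow> 0 + k * 0) F"
    by (intro tendsto_intros tendsto_divide_0[OF tendsto_const g_inf]
        filterlim_compose[OF ln_x_over_x_tendsto_0 g])
  then show "((\<lambda>x. C / g x + k * (ln (g x) / g x)) \<longlongrightarrow> 0) F" by simp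
  have "eventually (\<lambda>x. 0 < g x) F"
    using g by (simp add: filterlim_at_top_dense)
  with bounds show "eventually (\<lambda>x. c / g x \<le> u x / g x) F"
    "eventually (\<lambda>x. u x / g x \<le> C / g x + k * (ln (g x) / g x)) F"
    by (eventually_elim, simp add: divide_right_mono add_divide_distrib[symmetric])+
qed

lemma ln_deriv_increment_le_if_ratio_gt:
  fixes g g1 g2 :: "real \<Rightarrow> real"
  assumes "0 < Q"
    and deriv: "\<And>x. T \<le> x \<Longrightarrow> (g has_real_derivative g1 x) (at x) \<and> (g1 has_real_derivative g2 x) (at x)"
    and pos: "\<And>x. T \<le> x \<Longrightarrow> 0 < g x \<and> 0 < g1 x"
    and ratio: "\<And>x. T \<le> x \<Longrightarrow> Q < (g1 x)\<^sup>2 / (g x * g2 x)"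
    and "T \<le> t"
  shows "ln (g1 t) - ln (g1 T) \<le> (ln (g t) - ln (g T)) / Q"
proof -
  have le: "g2 x / g1 x \<le> g1 x / g x / Q" if "T \<le> x" for x
  proof (cases "0 < g2 x")
    case True
    with ratio[OF that] pos[OF that] \<open>0 < Q\<close> show ?thesis
      by (simp add: field_simps power2_eq_square)
  next
    case False
    then have "g2 x / g1 x \<le> 0"
      using pos[OF that] by (simp add: divide_nonpos_pos)
    also have "0 \<le> g1 x / g x / Q"
      using pos[OF that] \<open>0 < Q\<close> by simp
    finally show ?thesis .
  qed
  have dF: "((\<lambda>x. ln (g1 x)) has_real_derivative g2 x / g1 x) (at x)" if "T \<le> x" for x
    using deriv[OF that] pos[OF that] by (auto intro!: derivative_eq_intros)
  have dG: "((\<lambda>x. ln (g x) / Q) has_real_derivative g1 x / g x / Q) (at x)" if "T \<le> x" for x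
    using deriv[OF that] pos[OF that] \<open>0 < Q\<close> by (auto intro!: derivative_eq_intros)
  from increment_le_if_deriv_le[OF dF dG le \<open>T \<le> t\<close>] show ?thesis by (simp add: diff_divide_distrib)
qed

lemma ln_bounded_if_deriv_bounded_and_ratio_lt:
  fixes g g1 g2 :: "real \<Rightarrow> real"
  assumes "0 < Q"
    and deriv: "\<And>x. T \<le> x \<Longrightarrow> (g has_real_derivative g1 x) (at x) \<and> (g1 has_real_derivative g2 x) (at x)"
    and pos: "\<And>x. T \<le> x \<Longrightarrow> 0 < g x \<and> 0 < g1 x \<and> 0 < g2 x"
    and ratio: "\<And>x. T \<le> x \<Longrightarrow> (g1 x)\<^sup>2 / (g x * g2 x) < Q"
    and bound: "\<And>x. T \<le> x \<Longrightarrow> g1 x \<le> Z"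
    and "T \<le> t"
  shows "ln (g t) \<le> ln (g T) + Q * Z / g1 T"
proof -
  have "0 < Z" using bound pos by (meson order.refl less_le_trans)
  have le: "g1 x / g x / (Q * Z) \<le> g2 x / (g1 x)\<^sup>2" if "T \<le> x" for x
  proof -
    have "g1 x / g x / (Q * Z) \<le> 1 / (Q * g x)"
      using bound[OF that] pos[OF that] \<open>0 < Q\<close> \<open>0 < Z\<close> by (simp add: field_simps)
    also have "\<dots> \<le> g2 x / (g1 x)\<^sup>2"
      using ratio[OF that] pos[OF that] \<open>0 < Q\<close> by (simp add: field_simps)
    finally show ?thesis .
  qed
  have dF: "((\<lambda>x. ln (g x) / (Q * Z)) has_real_derivative g1 x / g x / (Q * Z)) (at x)"
    if "T \<le> x" for x
    using deriv[OF that] pos[OF that] \<open>0 < Q\<close> \<open>0 < Z\<close> by (auto intro!: derivative_eq_intros)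
  have dG: "((\<lambda>x. - inverse (g1 x)) has_real_derivative g2 x / (g1 x)\<^sup>2) (at x)"
    if "T \<le> x" for x
    using deriv[OF that] pos[OF that] by (auto intro!: derivative_eq_intros simp: power2_eq_square field_simps)
  from increment_le_if_deriv_le[OF dF dG le \<open>T \<le> t\<close>]
  have "(ln (g t) - ln (g T)) / (Q * Z) \<le> 1 / g1 T - 1 / g1 t"
    by (simp add: diff_divide_distrib inverse_eq_divide)
  also have "\<dots> \<le> 1 / g1 T"
    using pos[OF \<open>T \<le> t\<close>] by simp
  finally have "(ln (g t) - ln (g T)) / (Q * Z) \<le> 1 / g1 T" .
  with \<open>0 < Q\<close> \<open>0 < Z\<close> show ?thesis
    by (simp add: pos_divide_le_eq field_simps)
qed

lemma filterlim_deriv_at_top_if_ratio_lt: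
  fixes g g1 g2 :: "real \<Rightarrow> real"
  assumes "0 < Q" and g: "filterlim g at_top at_top"
    and deriv: "\<And>x. T \<le> x \<Longrightarrow> (g has_real_derivative g1 x) (at x) \<and> (g1 has_real_derivative g2 x) (at x)"
    and pos: "\<And>x. T \<le> x \<Longrightarrow> 0 < g x \<and> 0 < g1 x \<and> 0 < g2 x"
    and ratio: "\<And>x. T \<le> x \<Longrightarrow> (g1 x)\<^sup>2 / (g x * g2 x) < Q"
  shows "filterlim g1 at_top at_top"
proof (rule ccontr)
  assume "\<not> filterlim g1 at_top at_top"
  then obtain Z where not_ev: "\<not> eventually (\<lambda>x. Z \<le> g1 x) at_top"
    unfolding filterlim_at_top by blast
  have mono: "g1 s \<le> g1 x" if "T \<le> s" "s \<le> x" for s x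
    by (rule DERIV_nonneg_imp_nondecreasing[OF \<open>s \<le> x\<close>])
      (meson that deriv pos less_imp_le order_trans)
  have "g1 x \<le> Z" if "T \<le> x" for x
  proof -
    obtain n where "x \<le> n" "g1 n < Z"
      using not_ev unfolding eventually_at_top_linorder by (meson not_le)
    then show ?thesis using mono[OF that] by fastforce
  qed
  then have "eventually (\<lambda>t. ln (g t) \<le> ln (g T) + Q * Z / g1 T) at_top"
    using ln_bounded_if_deriv_bounded_and_ratio_lt[OF \<open>0 < Q\<close> deriv pos ratio]
    by (blast intro: eventually_at_top_linorderI)
  moreover have "filterlim (\<lambda>t. ln (g t)) at_top at_top"
    by (rule filterlim_compose[OF ln_at_top g])
  then have "eventually (\<lambda>t. ln (g T) + Q * Z / g1 T < ln (g t)) at_top"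
    by (simp add: filterlim_at_top_dense)
  ultimately have "eventually (\<lambda>t::real. False) at_top"
    by eventually_elim simp
  then show False by simp
qed

lemma tendsto_ln_deriv_div_0_if_ratio_gt:
  fixes g g1 g2 :: "real \<Rightarrow> real"
  assumes "0 < Q" and g: "filterlim g at_top at_top"
    and deriv: "\<And>x. T \<le> x \<Longrightarrow> (g has_real_derivative g1 x) (at x) \<and> (g1 has_real_derivative g2 x) (at x)"
    and pos: "\<And>x. T \<le> x \<Longrightarrow> 0 < g x \<and> 0 < g1 x \<and> 0 < g2 x"
    and ratio: "\<And>x. T \<le> x \<Longrightarrow> Q < (g1 x)\<^sup>2 / (g x * g2 x)"
  shows "((\<lambda>t. ln (g1 t) / g t) \<longlongrightarrow> 0) at_top"
proof (rule filterlim_div_0_if_ln_bounded[OF g])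
  show "eventually (\<lambda>t. ln (g1 T) \<le> ln (g1 t) \<and>
      ln (g1 t) \<le> (ln (g1 T) - ln (g T) / Q) + (1 / Q) * ln (g t)) at_top"
  proof (rule eventually_at_top_linorderI)
    fix t assume "T \<le> t"
    have "g1 T \<le> g1 t"
      by (rule DERIV_nonneg_imp_nondecreasing[OF \<open>T \<le> t\<close>]) (meson deriv pos less_imp_le)
    moreover have "ln (g1 t) - ln (g1 T) \<le> (ln (g t) - ln (g T)) / Q"
      by (rule ln_deriv_increment_le_if_ratio_gt) (use assms \<open>T \<le> t\<close> in auto)
    ultimately show "ln (g1 T) \<le> ln (g1 t) \<and> ln (g1 t) \<le> (ln (g1 T) - ln (g T) / Q) + (1 / Q) * ln (g t)"
      using pos[of T] \<open>0 < Q\<close> by (simp add: field_simps)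
  qed
qed

theorem lemma2p1:
  fixes f f1 f2 g g1 g2 :: "real \<Rightarrow> real" and t0 :: real
  assumes t0: "t0 \<ge> 0"
    and f_nonneg: "\<forall>t\<ge>0. f t \<ge> 0"
    and f_C1: "\<forall>t\<ge>0. (f has_real_derivative f1 t) (at t within {0..})"
    and f1_cont: "continuous_on {0..} f1"
    and f_pos: "\<forall>t\<ge>t0. f t > 0"
    and f_C2: "\<forall>t\<ge>t0. (f1 has_real_derivative f2 t) (at t within {t0..})"
    and f2_cont: "continuous_on {t0..} f2"
    and g_def: "\<forall>t\<ge>t0. g t = ln (f t)"
    and g_d1: "\<forall>t\<ge>t0. (g has_real_derivative g1 t) (at t within {t0..})"
    and g_d2: "\<forall>t\<ge>t0. (g1 has_real_derivative g2 t) (at t within {t0..})"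
    and H1_pos: "\<forall>t\<ge>t0. g1 t > 0 \<and> g2 t > 0"
    and H1_lim: "\<exists>(q::real) (p::ereal).
        ((\<lambda>t. (g1 t)\<^sup>2 / (g t * g2 t)) \<longlongrightarrow> q) at_top \<and>
        ((\<lambda>t. ereal (t * g1 t / g t)) \<longlongrightarrow> p) at_top \<and>
        ((q = 1 \<and> 0 < p) \<or> (q > 1 \<and> 0 < p \<and> p < \<infinity>)) \<and>
        (q = 1 \<longrightarrow>
           mono_on {t0..} (\<lambda>t. t * g1 t / g t) \<and>
           (\<exists>k::nat. k \<ge> 1 \<and> (\<exists>h h1 h2 :: real \<Rightarrow> real.
              (\<forall>t\<ge>t0. (h has_real_derivative h1 t) (at t within {t0..})) \<and>
              (\<forall>t\<ge>t0. (h1 has_real_derivative h2 t) (at t within {t0..})) \<and>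
              continuous_on {t0..} h2 \<and>
              (\<forall>t\<ge>t0. f t = (exp ^^ k) (h t)) \<and>
              antimono_on {t0..} (\<lambda>t. h1 t / h t))))"
  shows "strict_mono_on {t0..} g \<and> strict_mono_on {t0..} g1 \<and>
         filterlim g at_top at_top \<and> filterlim g1 at_top at_top \<and>
         ((\<lambda>t. ln (g1 t) / g t) \<longlongrightarrow> 0) at_top"
proof -
  have g_mono: "strict_mono_on {t0..} g" and g1_mono: "strict_mono_on {t0..} g1"
    using strict_mono_on_atLeast_if_deriv_pos[OF g_d1] strict_mono_on_atLeast_if_deriv_pos[OF g_d2] H1_pos
    by auto
  have deriv: "(g has_real_derivative g1 x) (at x) \<and> (g1 has_real_derivative g2 x) (at x)"
    if "t0 < x" for x
    using that g_d1 g_d2 by (auto intro: has_real_derivative_at_if_within_atLeast[where a = t0])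
  have g_top: "filterlim g at_top at_top"
    by (rule filterlim_at_top_if_deriv_ge[where g' = g1 and a = "t0 + 1" and c = "g1 (t0 + 1)"])
      (use deriv H1_pos strict_mono_on_leD[OF g1_mono] in auto)
  from H1_lim obtain q where q_lim: "((\<lambda>t. (g1 t)\<^sup>2 / (g t * g2 t)) \<longlongrightarrow> q) at_top" and "0 < q"
    by force
  have "eventually (\<lambda>t. t0 + 1 \<le> t \<and> 0 < g t \<and>
      q / 2 < (g1 t)\<^sup>2 / (g t * g2 t) \<and> (g1 t)\<^sup>2 / (g t * g2 t) < 2 * q) at_top"
    using \<open>0 < q\<close> g_top
    by (intro eventually_conj eventually_ge_at_top order_tendstoD[OF q_lim])
      (auto simp: filterlim_at_top_dense)
  then obtain T where T: "\<And>t. T \<le> t \<Longrightarrow> t0 + 1 \<le> t \<and> 0 < g t \<and>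
      q / 2 < (g1 t)\<^sup>2 / (g t * g2 t) \<and> (g1 t)\<^sup>2 / (g t * g2 t) < 2 * q"
    unfolding eventually_at_top_linorder by blast
  have deriv_T: "(g has_real_derivative g1 x) (at x) \<and> (g1 has_real_derivative g2 x) (at x)"
    and pos_T: "0 < g x \<and> 0 < g1 x \<and> 0 < g2 x" if "T \<le> x" for x
    using T[OF that] deriv H1_pos by auto
  have g1_top: "filterlim g1 at_top at_top"
    using filterlim_deriv_at_top_if_ratio_lt[of "2 * q", OF _ g_top deriv_T pos_T] T \<open>0 < q\<close> by auto
  have "((\<lambda>t. ln (g1 t) / g t) \<longlongrightarrow> 0) at_top"
    using tendsto_ln_deriv_div_0_if_ratio_gt[of "q / 2", OF _ g_top deriv_T pos_T] T \<open>0 < q\<close> by auto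
  with g_mono g1_mono g_top g1_top show ?thesis by blast
qed

end
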